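(* Let $H\subset\mathrm{Aut}(K^n)$ be the subgroup generated by $\mathcal{S}_n$ and $\{\sigma_{ij}\}_{1\le i<j\le n}$. For $1\le i<j\le n$ and $t\in H$, if $t$ has a fixed point on $\Delta_{K*\mu,ij}$, then $t=(i,j)$ (the transposition) or $t=\mathrm{id}_{K^n}$.
   Context: $n\ge2$. $\mu:K\to E$ is the universal covering of an Enriques surface $E$ by a K3 surface, $\sigma$ its (fixed-point-free) covering involution. $\mathcal{S}_n$ acts on $K^n$ by permuting factors; $\sigma_{ij}$ applies $\sigma$ to coordinates $i$ and $j$. $E^n_*\subset E^n$ is the set of $n$-tuples with at most two coordinates equal (i.e. at most one pair of equal coordinates and no three equal). $K^n_{*\mu}=(\mu^n)^{-1}(E^n_* )$ where $\mu^n(x_1,\dots,x_n)=(\mu(x_1),\dots,\mu(x_n))$, and $\Delta_{K*\mu,ij}=\{(x_l)\in K^n_{*\mu}:x_i=x_j\}$. *)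

theory Defs
  imports Main "HOL-Combinatorics.Transposition"
begin

text \<open>Abstract setting. The K3 surface K and Enriques surface E are modelled by
  types 'k and 'e; points of K^n are functions 'n \<Rightarrow> 'k, where the finite
  type 'n indexes the n factors.\<close>

definition perm_act :: "('n \<Rightarrow> 'n) \<Rightarrow> ('n \<Rightarrow> 'k) \<Rightarrow> ('n \<Rightarrow> 'k)" where
  "perm_act p x = x \<circ> inv p"

definition sigma_ij :: "('k \<Rightarrow> 'k) \<Rightarrow> 'n \<Rightarrow> 'n \<Rightarrow> ('n \<Rightarrow> 'k) \<Rightarrow> ('n \<Rightarrow> 'k)" where
  "sigma_ij \<sigma> i j x = x(i := \<sigma> (x i), j := \<sigma> (x j))"

text \<open>The subgroup H of Aut(K^n) generated by S_n and the sigma_ij.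
  (All generators have finite order, so the generated monoid is the generated group.)\<close>
inductive_set H_group :: "('k \<Rightarrow> 'k) \<Rightarrow> (('n \<Rightarrow> 'k) \<Rightarrow> ('n \<Rightarrow> 'k)) set"
  for \<sigma> :: "'k \<Rightarrow> 'k" where
  H_id: "id \<in> H_group \<sigma>"
| H_perm: "t \<in> H_group \<sigma> \<Longrightarrow> bij p \<Longrightarrow> perm_act p \<circ> t \<in> H_group \<sigma>"
| H_sigma: "t \<in> H_group \<sigma> \<Longrightarrow> i \<noteq> j \<Longrightarrow> sigma_ij \<sigma> i j \<circ> t \<in> H_group \<sigma>"

text \<open>E^n_*: at most one pair of equal coordinates and no three equal.\<close>
definition E_star :: "('n \<Rightarrow> 'e) set" where
  "E_star = {y. \<forall>a b c d. a \<noteq> b \<and> c \<noteq> d \<and> y a = y b \<and> y c = y d \<longrightarrow> {a, b} = {c, d}}"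

definition K_star_mu :: "('k \<Rightarrow> 'e) \<Rightarrow> ('n \<Rightarrow> 'k) set" where
  "K_star_mu \<mu> = {x. \<mu> \<circ> x \<in> E_star}"

definition Delta_K_star_mu :: "('k \<Rightarrow> 'e) \<Rightarrow> 'n \<Rightarrow> 'n \<Rightarrow> ('n \<Rightarrow> 'k) set" where
  "Delta_K_star_mu \<mu> i j = {x \<in> K_star_mu \<mu>. x i = x j}"

end

theory Submission
  imports Defs
begin

text \<open>Every element of H is a permutation of the factors followed by \<open>\<sigma>\<close> on some of them.
  At a fixed point x in \<open>\<Delta>\<close>, each coordinate is sent to one with the same image under \<open>\<mu>\<close>;
  since \<open>\<mu> \<circ> x\<close> has the single coincidence i, j, the permutation can only swap i and j,
  so it fixes every coordinate of x, and as \<open>\<sigma>\<close> has no fixed points no \<open>\<sigma>\<close> is applied.\<close>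

definition signed_perm_act ::
    "('k \<Rightarrow> 'k) \<Rightarrow> ('n \<Rightarrow> 'n) \<Rightarrow> ('n \<Rightarrow> bool) \<Rightarrow> ('n \<Rightarrow> 'k) \<Rightarrow> ('n \<Rightarrow> 'k)" where
  "signed_perm_act \<sigma> q e x = (\<lambda>k. if e k then \<sigma> (x (q k)) else x (q k))"

lemma H_group_signed_perm:
  assumes invol: "\<And>x. \<sigma> (\<sigma> x) = x"
    and "t \<in> H_group \<sigma>"
  shows "\<exists>q e. bij q \<and> t = signed_perm_act \<sigma> q e"
  using assms(2)
proof (induction rule: H_group.induct)
  case H_id
  have "id = signed_perm_act \<sigma> id (\<lambda>_. False)"
    by (simp add: signed_perm_act_def fun_eq_iff)
  then show ?case by blast
next
  case (H_perm t p)
  then obtain q e where q: "bij q" and t: "t = signed_perm_act \<sigma> q e" by blast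
  have "bij (q \<circ> inv p)"
    using q \<open>bij p\<close> by (simp add: bij_comp bij_imp_bij_inv)
  moreover have "perm_act p \<circ> t = signed_perm_act \<sigma> (q \<circ> inv p) (e \<circ> inv p)"
    by (simp add: t perm_act_def signed_perm_act_def fun_eq_iff)
  ultimately show ?case by blast
next
  case (H_sigma t i j)
  then obtain q e where q: "bij q" and t: "t = signed_perm_act \<sigma> q e" by blast
  have "sigma_ij \<sigma> i j \<circ> t = signed_perm_act \<sigma> q (e(i := \<not> e i, j := \<not> e j))"
    by (simp add: t invol sigma_ij_def signed_perm_act_def fun_eq_iff)
  with q show ?case by blast
qed

lemma signed_perm_act_no_sign: "signed_perm_act \<sigma> q (\<lambda>_. False) = (\<lambda>x. x \<circ> q)"
  by (simp add: signed_perm_act_def fun_eq_iff)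

lemma perm_act_transpose: "perm_act (transpose i j) x = x \<circ> transpose i j"
  by (simp add: perm_act_def inv_equality fun_eq_iff)

lemma E_star_coincidence_unique:
  assumes "y \<in> E_star" and "i \<noteq> j" and "y i = y j" and "a \<noteq> b" and "y a = y b"
  shows "{a, b} = {i, j}"
  using assms unfolding E_star_def by blast

lemma inj_moving_only_pair:
  assumes "inj q" and "i \<noteq> j"
    and moves: "\<And>k. q k \<noteq> k \<Longrightarrow> {q k, k} = {i, j}"
  shows "q = id \<or> q = transpose i j"
proof (cases "q i = i")
  case True
  have "q k = k" for k
  proof (rule ccontr)
    assume qk: "q k \<noteq> k"
    then have "k = j \<and> q j = i \<or> k = i"
      using moves[OF qk] by (auto simp: doubleton_eq_iff)
    with True qk \<open>inj q\<close> \<open>i \<noteq> j\<close> show False by (metis injD)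
  qed
  then show ?thesis by auto
next
  case False
  then have qi: "q i = j"
    using moves[of i] by (auto simp: doubleton_eq_iff)
  with \<open>inj q\<close> \<open>i \<noteq> j\<close> have "q j \<noteq> j" by (metis injD)
  then have qj: "q j = i"
    using moves[of j] by (auto simp: doubleton_eq_iff)
  have "q k = transpose i j k" for k
  proof (cases "k = i \<or> k = j")
    case True
    with qi qj show ?thesis by auto
  next
    case False
    then have "q k = k" using moves[of k] by (auto simp: doubleton_eq_iff)
    with False show ?thesis by (simp add: transpose_def)
  qed
  then show ?thesis by auto
qed

lemma signed_perm_fixed_point_same_fibre:
  assumes cover: "\<And>x y. \<mu> x = \<mu> y \<longleftrightarrow> y = x \<or> y = \<sigma> x"
    and fixed: "signed_perm_act \<sigma> q e x = x"
  shows "\<mu> (x (q k)) = \<mu> (x k)"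
proof -
  have "x k = (if e k then \<sigma> (x (q k)) else x (q k))"
    using fixed by (metis signed_perm_act_def)
  then show ?thesis using cover by (cases "e k") auto
qed

lemma signed_perm_fixing_Delta:
  assumes fpf: "\<And>x. \<sigma> x \<noteq> x"
    and cover: "\<And>x y. \<mu> x = \<mu> y \<longleftrightarrow> y = x \<or> y = \<sigma> x"
    and "i \<noteq> j" and "inj q"
    and x: "x \<in> Delta_K_star_mu \<mu> i j"
    and fixed: "signed_perm_act \<sigma> q e x = x"
  shows "(q = id \<or> q = transpose i j) \<and> e = (\<lambda>_. False)"
proof -
  have xij: "x i = x j" and xE: "\<mu> \<circ> x \<in> E_star"
    using x by (auto simp: Delta_K_star_mu_def K_star_mu_def)
  have moves: "{q k, k} = {i, j}" if "q k \<noteq> k" for k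
    using E_star_coincidence_unique[OF xE \<open>i \<noteq> j\<close> _ that]
      signed_perm_fixed_point_same_fibre[OF cover fixed] xij
    by simp
  have "x (q k) = x k" for k
    using moves[of k] xij by (cases "q k = k") (auto simp: doubleton_eq_iff)
  then have "\<not> e k" for k
    using fixed fpf by (metis signed_perm_act_def)
  with inj_moving_only_pair[OF \<open>inj q\<close> \<open>i \<noteq> j\<close> moves] show ?thesis by auto
qed

theorem lemma2p3:
  fixes \<sigma> :: "'k \<Rightarrow> 'k" and \<mu> :: "'k \<Rightarrow> 'e"
    and i j :: "'n::finite" and t :: "('n \<Rightarrow> 'k) \<Rightarrow> ('n \<Rightarrow> 'k)"
  assumes n2: "card (UNIV :: 'n set) \<ge> 2"
    and invol: "\<And>x. \<sigma> (\<sigma> x) = x"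
    and fpf: "\<And>x. \<sigma> x \<noteq> x"
    and cover: "\<And>x y. \<mu> x = \<mu> y \<longleftrightarrow> y = x \<or> y = \<sigma> x"
    and surj_mu: "surj \<mu>"
    and ij: "i \<noteq> j"
    and tH: "t \<in> H_group \<sigma>"
    and fixpt: "\<exists>x \<in> Delta_K_star_mu \<mu> i j. t x = x"
  shows "t = perm_act (transpose i j) \<or> t = id"
proof -
  obtain q e where "bij q" and t: "t = signed_perm_act \<sigma> q e"
    using H_group_signed_perm[OF invol tH] by blast
  obtain x where "x \<in> Delta_K_star_mu \<mu> i j" and "t x = x"
    using fixpt by blast
  then have q: "q = id \<or> q = transpose i j" and e: "e = (\<lambda>_. False)"
    using signed_perm_fixing_Delta[OF fpf cover ij bij_is_inj[OF \<open>bij q\<close>]] t by auto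
  have "t = (\<lambda>x. x \<circ> q)"
    unfolding t e by (simp add: signed_perm_act_no_sign)
  with q show ?thesis
    by (auto simp: perm_act_transpose fun_eq_iff)
qed

end
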